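(* In the setting described in the context, every $(x_1,x_2,y_1,y_2)\in S(q,\kappa)$ satisfies \[\kappa^2a_1x_2y_1+a_2x_2y_2\equiv 0\pmod q,\] \[2a_2x_1y_1+\kappa^3a_1x_2y_1+3\kappa a_2x_2y_2\equiv 0\pmod{q^2},\] \[5\kappa^2a_1a_2x_1y_1+a_2^2x_1y_2+\kappa^5a_1^2x_2y_1+5\kappa^3a_1a_2x_2y_2\equiv 0\pmod{q^3}.\] Conversely, if $(x_1,x_2,y_1,y_2)\in\mathbb{Z}^4$ satisfies the two congruences \[a_2x_1\equiv\kappa^3a_1x_2\pmod q,\qquad \kappa^2a_1y_1+a_2y_2\equiv 0\pmod q,\] together with the three congruences displayed above, and $r=\gcd(y_1,y_2,q)$, then \[18(a_1x_1^2y_1^3+a_2x_2^2y_2^3)\equiv 0\pmod{q^3r^2}.\]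
   Context: Let $a_1,a_2,a_3$ be non-zero square-free pairwise coprime integers, let $B\ge 2$, and let $X_1,X_2,X_3,Y_1,Y_2,Y_3$ be powers of 2 not exceeding $2B$ with $X_i^2Y_i^3\le 32B/|a_i|$ for $i=1,2,3$. Let $S_0(B)$ be the set of 6-tuples of positive integers $(x_1,x_2,x_3,y_1,y_2,y_3)$ with $\tfrac12X_i<x_i\le X_i$ and $\tfrac12Y_i<y_i\le Y_i$ ($i=1,2,3$), satisfying $a_1x_1^2y_1^3+a_2x_2^2y_2^3+a_3x_3^2y_3^3=0$, $\gcd(x_1y_1,x_2y_2,x_3y_3)=\gcd(a_1a_2a_3,x_1x_2x_3y_1y_2y_3)=1$, and with $a_1y_1,a_2y_2,a_3y_3$ square-free. Let $q$ be a square-free integer with $\tfrac12Y_3<q\le Y_3$ and $\gcd(q,a_1a_2)=1$, and let $\kappa$ be an integer with $\gcd(\kappa,q)=1$. Define $S(q,\kappa)$ as the set of $(x_1,x_2,y_1,y_2)\in\mathbb{Z}^4$ with $x_1y_1+\kappa x_2y_2\equiv 0\pmod q$ such that $(x_1,x_2,x_3,y_1,y_2,q)\in S_0(B)$ for some integer $x_3$. *)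

theory Defs
  imports Complex_Main "HOL-Number_Theory.Number_Theory" "HOL-Computational_Algebra.Squarefree"
begin

definition S0 :: "int \<Rightarrow> int \<Rightarrow> int \<Rightarrow> int \<Rightarrow> int \<Rightarrow> int \<Rightarrow> int \<Rightarrow> int \<Rightarrow> int
    \<Rightarrow> (int \<times> int \<times> int \<times> int \<times> int \<times> int) set" where
  "S0 a1 a2 a3 X1 X2 X3 Y1 Y2 Y3 =
    {(x1, x2, x3, y1, y2, y3).
       0 < x1 \<and> 0 < x2 \<and> 0 < x3 \<and> 0 < y1 \<and> 0 < y2 \<and> 0 < y3 \<and>
       X1 < 2 * x1 \<and> x1 \<le> X1 \<and> X2 < 2 * x2 \<and> x2 \<le> X2 \<and> X3 < 2 * x3 \<and> x3 \<le> X3 \<and>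
       Y1 < 2 * y1 \<and> y1 \<le> Y1 \<and> Y2 < 2 * y2 \<and> y2 \<le> Y2 \<and> Y3 < 2 * y3 \<and> y3 \<le> Y3 \<and>
       a1 * x1^2 * y1^3 + a2 * x2^2 * y2^3 + a3 * x3^2 * y3^3 = 0 \<and>
       gcd (x1 * y1) (gcd (x2 * y2) (x3 * y3)) = 1 \<and>
       gcd (a1 * a2 * a3) (x1 * x2 * x3 * y1 * y2 * y3) = 1 \<and>
       squarefree (a1 * y1) \<and> squarefree (a2 * y2) \<and> squarefree (a3 * y3)}"

definition Sqk :: "int \<Rightarrow> int \<Rightarrow> int \<Rightarrow> int \<Rightarrow> int \<Rightarrow> int \<Rightarrow> int \<Rightarrow> int \<Rightarrow> int
    \<Rightarrow> int \<Rightarrow> int \<Rightarrow> (int \<times> int \<times> int \<times> int) set" where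
  "Sqk a1 a2 a3 X1 X2 X3 Y1 Y2 Y3 q \<kappa> =
    {(x1, x2, y1, y2). [x1 * y1 + \<kappa> * x2 * y2 = 0] (mod q) \<and>
       (\<exists>x3. (x1, x2, x3, y1, y2, q) \<in> S0 a1 a2 a3 X1 X2 X3 Y1 Y2 Y3)}"

end

theory Submission
  imports Defs
begin

(* Forward direction: substitute x1 y1 = q m - \<kappa> x2 y2 into
   F = a1 x1^2 y1^3 + a2 x2^2 y2^3, which is divisible by q^3. Expanding in powers of q
   and cancelling x2 y2, y1 and y2, which are units modulo q, gives q | \<kappa>^2 a1 y1 + a2 y2
   and then the congruences modulo q^2 and q^3 one after the other.
   Converse: with a2 x1 = \<kappa>^3 a1 x2 + q m and \<kappa>^2 a1 y1 + a2 y2 = q n, the quadratic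
   and cubic congruences become linear relations between m, n and the cofactors, and
   (\<kappa>^3 a1 a2)^2 * 2F is an explicit multiple of q^3. Rerunning the computation modulo
   r = gcd(y1, y2, q), which also divides y1 and y2, gives r^5 | 18F. Since q is squarefree,
   r and q/r are coprime, so q^3 r^2 = r^5 (q/r)^3 divides 18F. *)

lemma coprime_summands_if_dvd_lincomb:
  fixes a b c k q :: "'a :: ring_gcd"
  assumes gcd_abc: "gcd a (gcd b c) = 1" and "q dvd c"
    and lincomb: "q dvd a + k * b" and "coprime k q"
  shows "coprime a q" and "coprime b q"
proof -
  have unit: "is_unit d" if "d dvd a" "d dvd b" "d dvd q" for d
    using that gcd_abc \<open>q dvd c\<close> by (metis dvd_trans gcd_greatest)
  show "coprime a q"
  proof (rule coprimeI)
    fix d assume d: "d dvd a" "d dvd q"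
    have "d dvd k * b"
      using d lincomb by (meson dvd_add_right_iff dvd_trans)
    moreover have "coprime d k"
      using \<open>coprime k q\<close> d(2) by (meson coprime_commute coprime_divisors dvd_refl)
    ultimately show "is_unit d"
      using unit d coprime_dvd_mult_right_iff by blast
  qed
  show "coprime b q"
  proof (rule coprimeI)
    fix d assume d: "d dvd b" "d dvd q"
    have "d dvd a"
      using d lincomb by (meson dvd_add_left_iff dvd_mult dvd_trans)
    then show "is_unit d" using unit d by blast
  qed
qed

lemma dvd_linear_form_if_solution:
  fixes a1 a2 k q x1 x2 y1 y2 :: int
  assumes "coprime (x2 * y2) q"
    and "q^3 dvd a1 * x1^2 * y1^3 + a2 * x2^2 * y2^3"
    and "q dvd x1 * y1 + k * x2 * y2"
  shows "q dvd k^2 * a1 * y1 + a2 * y2"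
proof -
  obtain c where c: "a1 * x1^2 * y1^3 + a2 * x2^2 * y2^3 = q^3 * c"
    using assms(2) ..
  obtain m where m: "x1 * y1 + k * x2 * y2 = q * m"
    using assms(3) ..
  have "(x2 * y2)^2 * (k^2 * a1 * y1 + a2 * y2)
      = (a1 * x1^2 * y1^3 + a2 * x2^2 * y2^3) - a1 * y1 * (x1 * y1 - k * x2 * y2) * (x1 * y1 + k * x2 * y2)"
    by Groebner_Basis.algebra
  also have "\<dots> = q * (q^2 * c - a1 * y1 * (x1 * y1 - k * x2 * y2) * m)"
    unfolding c m by Groebner_Basis.algebra
  finally have "q dvd (x2 * y2)^2 * (k^2 * a1 * y1 + a2 * y2)"
    by (rule dvdI)
  moreover have "coprime q ((x2 * y2)^2)"
    using assms(1) by (simp add: coprime_commute)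
  ultimately show ?thesis
    using coprime_dvd_mult_right_iff by blast
qed

lemma dvd_higher_forms_if_solution:
  fixes a1 a2 k q x1 x2 y1 y2 :: int
  assumes "q \<noteq> 0" and "coprime y1 q" and "coprime (x2 * y2) q"
    and F: "q^3 dvd a1 * x1^2 * y1^3 + a2 * x2^2 * y2^3"
    and lin: "q dvd x1 * y1 + k * x2 * y2"
  shows "q^2 dvd 2 * a2 * x1 * y1 + k^3 * a1 * x2 * y1 + 3 * k * a2 * x2 * y2"
    and "q^3 dvd 5 * k^2 * a1 * a2 * x1 * y1 + a2^2 * x1 * y2 + k^5 * a1^2 * x2 * y1
           + 5 * k^3 * a1 * a2 * x2 * y2"
proof -
  obtain c where c: "a1 * x1^2 * y1^3 + a2 * x2^2 * y2^3 = q^3 * c"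
    using F ..
  obtain m where m: "x1 * y1 + k * x2 * y2 = q * m"
    using lin ..
  obtain n where n: "k^2 * a1 * y1 + a2 * y2 = q * n"
    using dvd_linear_form_if_solution[OF assms(3) F lin] ..
  have cop_q: "coprime q (x2 * y2)" "coprime q y1" "coprime q y2"
    using assms(2,3) by (simp_all add: coprime_commute)
  \<comment> \<open>Substituting \<open>x1 * y1 = q * m - k * x2 * y2\<close> writes the form as \<open>q * G\<close>.\<close>
  define G where "G = (x2 * y2)^2 * n - 2 * k * a1 * y1 * (x2 * y2) * m + q * a1 * y1 * m^2"
  have "q * G = q * (q^2 * c)"
    unfolding G_def using c m n by Groebner_Basis.algebra
  then have G: "G = q^2 * c"
    using \<open>q \<noteq> 0\<close> by simp
  define H where "H = x2 * y2 * n - 2 * k * a1 * y1 * m"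
  have "x2 * y2 * H = q * (q * c - a1 * y1 * m^2)"
    using G unfolding G_def H_def by Groebner_Basis.algebra
  then have "q dvd x2 * y2 * H"
    by (rule dvdI)
  then obtain h where h: "H = q * h"
    using cop_q(1) coprime_dvd_mult_right_iff by blast
  have "y2 * (2 * a2 * x1 * y1 + k^3 * a1 * x2 * y1 + 3 * k * a2 * x2 * y2) = q^2 * (k * h + 2 * n * m)"
    using m n h unfolding H_def by Groebner_Basis.algebra
  then have "q^2 dvd y2 * (2 * a2 * x1 * y1 + k^3 * a1 * x2 * y1 + 3 * k * a2 * x2 * y2)"
    by (rule dvdI)
  then show "q^2 dvd 2 * a2 * x1 * y1 + k^3 * a1 * x2 * y1 + 3 * k * a2 * x2 * y2"
    using cop_q(3) by (simp add: coprime_dvd_mult_right_iff)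
  have "x2 * y2 * y1 * y2 * (5 * k^2 * a1 * a2 * x1 * y1 + a2^2 * x1 * y2 + k^5 * a1^2 * x2 * y1
           + 5 * k^3 * a1 * a2 * x2 * y2)
      = q^3 * (2 * k^3 * a1 * y1 * c - k * (x2 * y2 * n - k * a1 * y1 * m) * h + x2 * y2 * m * n^2)"
    using m n h G unfolding H_def G_def by Groebner_Basis.algebra
  then have "q^3 dvd x2 * y2 * y1 * y2 * (5 * k^2 * a1 * a2 * x1 * y1 + a2^2 * x1 * y2
           + k^5 * a1^2 * x2 * y1 + 5 * k^3 * a1 * a2 * x2 * y2)"
    by (rule dvdI)
  then show "q^3 dvd 5 * k^2 * a1 * a2 * x1 * y1 + a2^2 * x1 * y2 + k^5 * a1^2 * x2 * y1
           + 5 * k^3 * a1 * a2 * x2 * y2"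
    using cop_q by (simp add: coprime_dvd_mult_right_iff)
qed

lemma Sqk_congruences:
  fixes a1 a2 a3 X1 X2 X3 Y1 Y2 Y3 q \<kappa> x1 x2 y1 y2 :: int
  assumes "q \<noteq> 0" and "coprime \<kappa> q"
    and "(x1, x2, y1, y2) \<in> Sqk a1 a2 a3 X1 X2 X3 Y1 Y2 Y3 q \<kappa>"
  shows "q dvd \<kappa>^2 * a1 * x2 * y1 + a2 * x2 * y2"
    and "q^2 dvd 2 * a2 * x1 * y1 + \<kappa>^3 * a1 * x2 * y1 + 3 * \<kappa> * a2 * x2 * y2"
    and "q^3 dvd 5 * \<kappa>^2 * a1 * a2 * x1 * y1 + a2^2 * x1 * y2 + \<kappa>^5 * a1^2 * x2 * y1
           + 5 * \<kappa>^3 * a1 * a2 * x2 * y2"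
proof -
  obtain x3 where lin: "q dvd x1 * y1 + \<kappa> * x2 * y2"
    and "(x1, x2, x3, y1, y2, q) \<in> S0 a1 a2 a3 X1 X2 X3 Y1 Y2 Y3"
    using assms(3) unfolding Sqk_def by (auto simp: cong_0_iff)
  then have eq: "a1 * x1^2 * y1^3 + a2 * x2^2 * y2^3 + a3 * x3^2 * q^3 = 0"
    and gcd: "gcd (x1 * y1) (gcd (x2 * y2) (x3 * q)) = 1"
    unfolding S0_def by auto
  have "a1 * x1^2 * y1^3 + a2 * x2^2 * y2^3 = q^3 * (- a3 * x3^2)"
    using eq by (simp add: algebra_simps)
  then have F: "q^3 dvd a1 * x1^2 * y1^3 + a2 * x2^2 * y2^3"
    by (rule dvdI)
  have "q dvd x1 * y1 + \<kappa> * (x2 * y2)"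
    using lin by (simp add: mult.assoc)
  then have "coprime (x1 * y1) q" and cop2: "coprime (x2 * y2) q"
    using coprime_summands_if_dvd_lincomb[OF gcd _ _ \<open>coprime \<kappa> q\<close>] by auto
  then have "coprime y1 q"
    by simp
  have "q dvd x2 * (\<kappa>^2 * a1 * y1 + a2 * y2)"
    using dvd_linear_form_if_solution[OF cop2 F lin] by simp
  then show "q dvd \<kappa>^2 * a1 * x2 * y1 + a2 * x2 * y2"
    by (simp add: algebra_simps)
  show "q^2 dvd 2 * a2 * x1 * y1 + \<kappa>^3 * a1 * x2 * y1 + 3 * \<kappa> * a2 * x2 * y2"
    and "q^3 dvd 5 * \<kappa>^2 * a1 * a2 * x1 * y1 + a2^2 * x1 * y2 + \<kappa>^5 * a1^2 * x2 * y1
           + 5 * \<kappa>^3 * a1 * a2 * x2 * y2"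
    using dvd_higher_forms_if_solution[OF \<open>q \<noteq> 0\<close> \<open>coprime y1 q\<close> cop2 F lin] by auto
qed

lemma coprime_if_squarefree_mult:
  fixes r s :: "'a :: semiring_gcd"
  assumes "squarefree (r * s)"
  shows "coprime r s"
proof (rule coprimeI)
  fix d assume "d dvd r" "d dvd s"
  then have "d^2 dvd r * s" by (simp add: power2_eq_square mult_dvd_mono)
  then show "is_unit d" using assms squarefreeD by blast
qed

lemma cube_mult_square_dvd_if_squarefree:
  fixes q r N :: "'a :: semiring_gcd"
  assumes "squarefree q" "r dvd q" "q^3 dvd N" "r^5 dvd N"
  shows "q^3 * r^2 dvd N"
proof -
  obtain s where q: "q = r * s" using \<open>r dvd q\<close> ..
  have "coprime (r^5) (s^3)"
    using coprime_if_squarefree_mult \<open>squarefree q\<close> q by simp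
  moreover have "s^3 dvd N"
    using \<open>q^3 dvd N\<close> q by (simp add: power_mult_distrib dvd_mult_right)
  ultimately have "r^5 * s^3 dvd N"
    using \<open>r^5 dvd N\<close> by (simp add: divides_mult)
  moreover have "q^3 * r^2 = r^5 * s^3"
    unfolding q by (simp add: algebra_simps flip: power_add)
  ultimately show ?thesis by simp
qed

lemma cube_dvd_form_if_congruences:
  fixes a1 a2 k q x1 x2 y1 y2 :: int
  assumes "q \<noteq> 0" and "coprime (k * a1 * a2) q"
    and "q dvd a2 * x1 - k^3 * a1 * x2"
    and "q dvd k^2 * a1 * y1 + a2 * y2"
    and "q^2 dvd 2 * a2 * x1 * y1 + k^3 * a1 * x2 * y1 + 3 * k * a2 * x2 * y2"
    and "q^3 dvd 5 * k^2 * a1 * a2 * x1 * y1 + a2^2 * x1 * y2 + k^5 * a1^2 * x2 * y1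
           + 5 * k^3 * a1 * a2 * x2 * y2"
  shows "q^3 dvd 2 * (a1 * x1^2 * y1^3 + a2 * x2^2 * y2^3)"
proof -
  obtain m where m: "a2 * x1 - k^3 * a1 * x2 = q * m" using assms(3) ..
  obtain n where n: "k^2 * a1 * y1 + a2 * y2 = q * n" using assms(4) ..
  obtain c2 where c2: "2 * a2 * x1 * y1 + k^3 * a1 * x2 * y1 + 3 * k * a2 * x2 * y2 = q^2 * c2"
    using assms(5) ..
  obtain c3 where c3: "5 * k^2 * a1 * a2 * x1 * y1 + a2^2 * x1 * y2 + k^5 * a1^2 * x2 * y1
           + 5 * k^3 * a1 * a2 * x2 * y2 = q^3 * c3"
    using assms(6) ..
  define \<alpha> where "\<alpha> = k^2 * a1 * y1"
  define u where "u = k^3 * a1 * x2"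
  have "q * (2 * \<alpha> * m + 3 * u * n) = q * (q * (k^2 * a1 * c2))"
    using m n c2 unfolding \<alpha>_def u_def by Groebner_Basis.algebra
  then have quadratic: "2 * \<alpha> * m + 3 * u * n = q * (k^2 * a1 * c2)"
    using \<open>q \<noteq> 0\<close> by simp
  have "q^2 * (2 * k^2 * a1 * c2 + m * n) = q^2 * (q * c3)"
    using m n c3 quadratic unfolding \<alpha>_def u_def by Groebner_Basis.algebra
  then have cubic: "2 * k^2 * a1 * c2 + m * n = q * c3"
    using \<open>q \<noteq> 0\<close> by simp
  have "(k^6 * a1^2 * a2^2) * (2 * (a1 * x1^2 * y1^3 + a2 * x2^2 * y2^3))
      = q^3 * (\<alpha>^2 * u * c3 + \<alpha> * k^2 * a1 * c2 * (\<alpha> * m - 2 * u * n) + 2 * u^2 * n^3)"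
    using m n quadratic cubic unfolding \<alpha>_def u_def by Groebner_Basis.algebra
  then have "q^3 dvd (k^6 * a1^2 * a2^2) * (2 * (a1 * x1^2 * y1^3 + a2 * x2^2 * y2^3))"
    by (rule dvdI)
  moreover have "coprime (q^3) (k^6 * a1^2 * a2^2)"
    using assms(2) by (simp add: coprime_commute)
  ultimately show ?thesis
    using coprime_dvd_mult_right_iff by blast
qed

lemma fifth_power_dvd_form_if_congruences:
  fixes a1 a2 k r x1 x2 y1 y2 :: int
  assumes "r \<noteq> 0" and "coprime (k * a1 * a2) r"
    and "r dvd y1" and "r dvd y2"
    and "r dvd a2 * x1 - k^3 * a1 * x2"
    and "r^2 dvd 2 * a2 * x1 * y1 + k^3 * a1 * x2 * y1 + 3 * k * a2 * x2 * y2"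
    and "r^3 dvd 5 * k^2 * a1 * a2 * x1 * y1 + a2^2 * x1 * y2 + k^5 * a1^2 * x2 * y1
           + 5 * k^3 * a1 * a2 * x2 * y2"
  shows "r^5 dvd 18 * (a1 * x1^2 * y1^3 + a2 * x2^2 * y2^3)"
proof -
  obtain z1 where y1: "y1 = r * z1" using assms(3) ..
  obtain z2 where y2: "y2 = r * z2" using assms(4) ..
  obtain M where M: "a2 * x1 = k^3 * a1 * x2 + r * M"
    using assms(5) by (auto simp: dvd_def algebra_simps)
  obtain c2 where c2: "2 * a2 * x1 * y1 + k^3 * a1 * x2 * y1 + 3 * k * a2 * x2 * y2 = r^2 * c2"
    using assms(6) ..
  obtain c3 where c3: "5 * k^2 * a1 * a2 * x1 * y1 + a2^2 * x1 * y2 + k^5 * a1^2 * x2 * y1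
           + 5 * k^3 * a1 * a2 * x2 * y2 = r^3 * c3"
    using assms(7) ..
  define \<alpha> where "\<alpha> = k^2 * a1 * z1"
  define u where "u = k^3 * a1 * x2"
  define Z where "Z = k^2 * a1 * z1 + a2 * z2"
  define e where "e = k^2 * a1 * c2 - 2 * M * \<alpha>"
  have "r * (3 * u * Z) = r * (r * e)"
    using M c2 unfolding y1 y2 \<alpha>_def u_def Z_def e_def by Groebner_Basis.algebra
  then have quadratic: "3 * u * Z = r * e"
    using \<open>r \<noteq> 0\<close> by simp
  have "r^2 * (2 * e + M * (4 * \<alpha> + Z)) = r^2 * (r * c3)"
    using M c3 quadratic unfolding y1 y2 \<alpha>_def u_def Z_def by Groebner_Basis.algebra
  then have cubic: "2 * e + M * (4 * \<alpha> + Z) = r * c3"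
    using \<open>r \<noteq> 0\<close> by simp
  have "(k^6 * a1^2 * a2^2) * (18 * (a1 * x1^2 * y1^3 + a2 * x2^2 * y2^3))
      = r^5 * (18 * \<alpha>^3 * M^2 + 2 * e^2 * Z - 6 * e^2 * \<alpha> + 9 * u * \<alpha>^2 * c3 - 3 * \<alpha>^2 * M * e)"
    using M quadratic cubic unfolding y1 y2 \<alpha>_def u_def Z_def by Groebner_Basis.algebra
  then have "r^5 dvd (k^6 * a1^2 * a2^2) * (18 * (a1 * x1^2 * y1^3 + a2 * x2^2 * y2^3))"
    by (rule dvdI)
  moreover have "coprime (r^5) (k^6 * a1^2 * a2^2)"
    using assms(2) by (simp add: coprime_commute)
  ultimately show ?thesis
    using coprime_dvd_mult_right_iff by blast
qed

lemma form_dvd_if_congruences: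
  fixes a1 a2 k q x1 x2 y1 y2 :: int
  assumes "squarefree q" and "coprime (k * a1 * a2) q"
    and lin_x: "q dvd a2 * x1 - k^3 * a1 * x2"
    and lin_y: "q dvd k^2 * a1 * y1 + a2 * y2"
    and quadratic: "q^2 dvd 2 * a2 * x1 * y1 + k^3 * a1 * x2 * y1 + 3 * k * a2 * x2 * y2"
    and cubic: "q^3 dvd 5 * k^2 * a1 * a2 * x1 * y1 + a2^2 * x1 * y2 + k^5 * a1^2 * x2 * y1
           + 5 * k^3 * a1 * a2 * x2 * y2"
  shows "q^3 * (gcd y1 (gcd y2 q))^2 dvd 18 * (a1 * x1^2 * y1^3 + a2 * x2^2 * y2^3)"
proof -
  define F where "F = a1 * x1^2 * y1^3 + a2 * x2^2 * y2^3"
  define r where "r = gcd y1 (gcd y2 q)"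
  have "q \<noteq> 0"
    using \<open>squarefree q\<close> by auto
  have "r dvd y1" "r dvd y2" "r dvd q"
    unfolding r_def by (meson dvd_trans gcd_dvd1 gcd_dvd2)+
  then have "r \<noteq> 0" "coprime (k * a1 * a2) r"
    using \<open>q \<noteq> 0\<close> assms(2) coprime_divisors[of 1 "k * a1 * a2"] by auto
  have "q^3 dvd 2 * F"
    unfolding F_def by (rule cube_dvd_form_if_congruences[OF \<open>q \<noteq> 0\<close> assms(2) lin_x lin_y quadratic cubic])
  then have "q^3 dvd 18 * F"
    using dvd_mult[of "q^3" "2 * F" 9] by simp
  moreover have "r^5 dvd 18 * F"
    unfolding F_def
  proof (rule fifth_power_dvd_form_if_congruences)
    show "r dvd a2 * x1 - k^3 * a1 * x2"
      using \<open>r dvd q\<close> lin_x by (rule dvd_trans)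
    show "r^2 dvd 2 * a2 * x1 * y1 + k^3 * a1 * x2 * y1 + 3 * k * a2 * x2 * y2"
      using \<open>r dvd q\<close> quadratic by (meson dvd_power_same dvd_trans)
    show "r^3 dvd 5 * k^2 * a1 * a2 * x1 * y1 + a2^2 * x1 * y2 + k^5 * a1^2 * x2 * y1
           + 5 * k^3 * a1 * a2 * x2 * y2"
      using \<open>r dvd q\<close> cubic by (meson dvd_power_same dvd_trans)
qed fact+
  ultimately show ?thesis
    unfolding F_def[symmetric] r_def[symmetric]
    using cube_mult_square_dvd_if_squarefree[OF \<open>squarefree q\<close> \<open>r dvd q\<close>] by simp
qed

theorem lemma13:
  fixes a1 a2 a3 X1 X2 X3 Y1 Y2 Y3 q \<kappa> :: int and B :: real
  assumes a_nz: "a1 \<noteq> 0" "a2 \<noteq> 0" "a3 \<noteq> 0"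
    and a_sqf: "squarefree a1" "squarefree a2" "squarefree a3"
    and a_cop: "coprime a1 a2" "coprime a1 a3" "coprime a2 a3"
    and B: "B \<ge> 2"
    and X_pow: "\<exists>k::nat. X1 = 2^k" "\<exists>k::nat. X2 = 2^k" "\<exists>k::nat. X3 = 2^k"
    and Y_pow: "\<exists>k::nat. Y1 = 2^k" "\<exists>k::nat. Y2 = 2^k" "\<exists>k::nat. Y3 = 2^k"
    and X_le: "real_of_int X1 \<le> 2 * B" "real_of_int X2 \<le> 2 * B" "real_of_int X3 \<le> 2 * B"
    and Y_le: "real_of_int Y1 \<le> 2 * B" "real_of_int Y2 \<le> 2 * B" "real_of_int Y3 \<le> 2 * B"
    and XY: "real_of_int (X1^2 * Y1^3) \<le> 32 * B / real_of_int \<bar>a1\<bar>"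
            "real_of_int (X2^2 * Y2^3) \<le> 32 * B / real_of_int \<bar>a2\<bar>"
            "real_of_int (X3^2 * Y3^3) \<le> 32 * B / real_of_int \<bar>a3\<bar>"
    and q_sqf: "squarefree q"
    and q_range: "Y3 < 2 * q" "q \<le> Y3"
    and q_cop: "gcd q (a1 * a2) = 1"
    and k_cop: "gcd \<kappa> q = 1"
  shows
    "(\<forall>(x1, x2, y1, y2) \<in> Sqk a1 a2 a3 X1 X2 X3 Y1 Y2 Y3 q \<kappa>.
        [\<kappa>^2 * a1 * x2 * y1 + a2 * x2 * y2 = 0] (mod q) \<and>
        [2 * a2 * x1 * y1 + \<kappa>^3 * a1 * x2 * y1 + 3 * \<kappa> * a2 * x2 * y2 = 0] (mod q^2) \<and>
        [5 * \<kappa>^2 * a1 * a2 * x1 * y1 + a2^2 * x1 * y2 + \<kappa>^5 * a1^2 * x2 * y1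
           + 5 * \<kappa>^3 * a1 * a2 * x2 * y2 = 0] (mod q^3))
     \<and>
     (\<forall>x1 x2 y1 y2 :: int.
        [a2 * x1 = \<kappa>^3 * a1 * x2] (mod q) \<longrightarrow>
        [\<kappa>^2 * a1 * y1 + a2 * y2 = 0] (mod q) \<longrightarrow>
        [\<kappa>^2 * a1 * x2 * y1 + a2 * x2 * y2 = 0] (mod q) \<longrightarrow>
        [2 * a2 * x1 * y1 + \<kappa>^3 * a1 * x2 * y1 + 3 * \<kappa> * a2 * x2 * y2 = 0] (mod q^2) \<longrightarrow>
        [5 * \<kappa>^2 * a1 * a2 * x1 * y1 + a2^2 * x1 * y2 + \<kappa>^5 * a1^2 * x2 * y1
           + 5 * \<kappa>^3 * a1 * a2 * x2 * y2 = 0] (mod q^3) \<longrightarrow>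
        [18 * (a1 * x1^2 * y1^3 + a2 * x2^2 * y2^3) = 0] (mod (q^3 * (gcd y1 (gcd y2 q))^2)))"
proof -
  have "q \<noteq> 0"
    using q_sqf by auto
  have "coprime \<kappa> q" and "coprime (a1 * a2) q"
    using k_cop q_cop by (simp_all add: coprime_iff_gcd_eq_1 gcd.commute)
  then have "coprime (\<kappa> * a1 * a2) q"
    by (simp add: mult.assoc)
  show ?thesis
    using Sqk_congruences[OF \<open>q \<noteq> 0\<close> \<open>coprime \<kappa> q\<close>]
      form_dvd_if_congruences[OF q_sqf \<open>coprime (\<kappa> * a1 * a2) q\<close>]
    by (auto simp: cong_0_iff cong_iff_dvd_diff)
qed

end
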